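(* Let $p$ be a prime and $n\ge 2$ an integer with base-$p$ expansion $n=n_0+n_1p+\cdots+n_kp^k$, where $n_0,\ldots,n_k\in\{0,1,\ldots,p-1\}$ and $n_k>0$. Define \[ P := \{ b_0+b_1p+\cdots+b_kp^k : 0\le b_j\le n_j,\ j=0,1,\ldots,k\}\setminus\{0,n\}, \] which is a subset of $[n-1]$ with $|P|=\prod_{j=0}^k(n_j+1)-2$. For each composition $\beta=(\beta_1,\ldots,\beta_\ell)$ of $n$ write the base-$p$ digits of each part as $\beta_i=\sum_{j=0}^k\beta_{ij}p^j$ with $\beta_{ij}\in\{0,\ldots,p-1\}$ (padding with zeros). For each $T\subseteq P$ define \[ r(T) := \sum_{\substack{\beta\models n,\ D(\beta)\subseteq T\\ \beta_{1j}+\cdots+\beta_{\ell j}=n_j\ \forall j}} (-1)^{|T|-|D(\beta)|}\prod_{j=0}^k\binom{n_j}{\beta_{1j},\ldots,\beta_{\ell j}}. \] Then for every $i\in\mathbb{Z}_p$, \[ c_{p,i}(n)=\begin{cases} 2^{\,n+1-\prod_{j=0}^k(n_j+1)}\,\bigl|\{T\subseteq P: r(T)\equiv i \pmod p\}\bigr| & \text{if } p=2 \text{ or } i=0 \text{ or } n_0=\cdots=n_{k-1}=p-1,\\ 2^{\,n-\prod_{j=0}^k(n_j+1)}\,\bigl|\{T\subseteq P: r(T)\equiv i \text{ or } r(T)\equiv -i \pmod p\}\bigr| & \text{otherwise.}\end{cases} \]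
   Context: For a permutation $w$ of $[n]=\{1,\ldots,n\}$, its descent set is $D(w)=\{i\in[n-1]: w(i)>w(i+1)\}$. A composition of $n$ (written $\alpha\models n$) is a sequence $\alpha=(\alpha_1,\ldots,\alpha_\ell)$ of positive integers with sum $n$; its length is $\ell(\alpha)=\ell$ and its descent set is $D(\alpha)=\{\alpha_1,\alpha_1+\alpha_2,\ldots,\alpha_1+\cdots+\alpha_{\ell-1}\}\subseteq[n-1]$. The ribbon number of $\alpha$ is $r_\alpha=|\{w\in\mathfrak{S}_n: D(w)=D(\alpha)\}|$. For a prime $p$ and $i\in\mathbb{Z}_p$, $c_{p,i}(n)$ is the number of compositions $\alpha\models n$ with $r_\alpha\equiv i\pmod p$. Multinomial coefficients $\binom{m}{m_1,\ldots,m_k}$ (nonnegative entries) equal $m!/(m_1!\cdots m_k!)$ if $m_1+\cdots+m_k=m$ and $0$ otherwise. *)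

theory Defs
  imports "HOL-Combinatorics.Combinatorics" "HOL-Number_Theory.Number_Theory"
begin

definition perm_descents :: "nat \<Rightarrow> (nat \<Rightarrow> nat) \<Rightarrow> nat set" where
  "perm_descents n w = {i \<in> {1..n-1}. w i > w (Suc i)}"

definition is_composition :: "nat \<Rightarrow> nat list \<Rightarrow> bool" where
  "is_composition n \<alpha> \<longleftrightarrow> (\<forall>a\<in>set \<alpha>. 0 < a) \<and> sum_list \<alpha> = n"

definition compositions :: "nat \<Rightarrow> nat list set" where
  "compositions n = {\<alpha>. is_composition n \<alpha>}"

definition comp_descents :: "nat list \<Rightarrow> nat set" where
  "comp_descents \<alpha> = {sum_list (take j \<alpha>) | j. 1 \<le> j \<and> j < length \<alpha>}"

definition ribbon :: "nat \<Rightarrow> nat list \<Rightarrow> nat" where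
  "ribbon n \<alpha> = card {w. w permutes {1..n} \<and> perm_descents n w = comp_descents \<alpha>}"

definition c_count :: "nat \<Rightarrow> int \<Rightarrow> nat \<Rightarrow> nat" where
  "c_count p i n = card {\<alpha> \<in> compositions n. [int (ribbon n \<alpha>) = i] (mod int p)}"

definition digit :: "nat \<Rightarrow> nat \<Rightarrow> nat \<Rightarrow> nat" where
  "digit p m j = (m div p ^ j) mod p"

definition multinom :: "nat \<Rightarrow> nat list \<Rightarrow> nat" where
  "multinom m ms = (if sum_list ms = m then fact m div prod_list (map fact ms) else 0)"

text \<open>The set P (k is the index of the top base-p digit of n).\<close>
definition Pset :: "nat \<Rightarrow> nat \<Rightarrow> nat \<Rightarrow> nat set" where
  "Pset p k n = {(\<Sum>j\<le>k. b j * p ^ j) | b. \<forall>j\<le>k. b j \<le> digit p n j} - {0, n}"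

definition rT :: "nat \<Rightarrow> nat \<Rightarrow> nat \<Rightarrow> nat set \<Rightarrow> int" where
  "rT p k n T = (\<Sum>\<beta> \<in> {\<beta> \<in> compositions n. comp_descents \<beta> \<subseteq> T \<and>
                    (\<forall>j\<le>k. (\<Sum>b\<leftarrow>\<beta>. digit p b j) = digit p n j)}.
      (-1) ^ (card T - card (comp_descents \<beta>)) *
      (\<Prod>j\<le>k. int (multinom (digit p n j) (map (\<lambda>b. digit p b j) \<beta>))))"

end

theory Submission
  imports Defs
begin

text \<open>
  Write \<open>\<beta>\<^sub>n(S)\<close> for the number of permutations of [n] with descent set \<open>S\<close>, so that the
  ribbon number of \<open>\<alpha>\<close> is \<open>\<beta>\<^sub>n(D(\<alpha>))\<close>. The permutations whose descents lie in \<open>D(\<beta>)\<close> are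
  counted by the multinomial coefficient of \<open>\<beta>\<close>, so Moebius inversion over subsets gives
  \<open>\<beta>\<^sub>n(S) = \<Sum>(-1)^(|S| - |D(\<beta>)|) (n choose \<beta>)\<close>, summed over the compositions with
  \<open>D(\<beta>) \<subseteq> S\<close>. By Lucas' theorem the multinomial coefficient is congruent modulo \<open>p\<close> to the
  product of the digitwise multinomial coefficients, which vanishes unless the digits of the
  parts of \<open>\<beta>\<close> add up to those of \<open>n\<close> without carries; in that case every partial sum of
  \<open>\<beta>\<close> is digitwise dominated by \<open>n\<close>, i.e. \<open>D(\<beta>) \<subseteq> P\<close>. Hence
  \<open>\<beta>\<^sub>n(S) \<equiv> (-1)^|S - P| r(S \<inter> P) (mod p)\<close>.

  Compositions of \<open>n\<close> correspond to subsets of [n-1] via their descent sets, so \<open>c_count p i n\<close>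
  counts the pairs \<open>T \<subseteq> P\<close>, \<open>R \<subseteq> Q = [n-1] - P\<close> with \<open>(-1)^|R| r(T) \<equiv> i\<close>. The sign is
  irrelevant when \<open>p = 2\<close> or \<open>i = 0\<close>, and \<open>Q\<close> is empty exactly when the lower digits of \<open>n\<close> all
  equal \<open>p - 1\<close>; otherwise half of the \<open>2^|Q|\<close> subsets \<open>R\<close> have each parity, and
  \<open>r(T) \<equiv> i\<close> and \<open>r(T) \<equiv> -i\<close> exclude each other.
\<close>

section \<open>Base-p digits\<close>

lemma digit_Suc: "digit p m (Suc j) = digit p (m div p) j"
  by (simp add: digit_def div_mult2_eq)

lemma digit_less: "p > 0 \<Longrightarrow> digit p m j < p"
  by (simp add: digit_def)

lemma digit_0: "digit p m 0 = m mod p"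
  by (simp add: digit_def)

lemma sum_digits_lessThan: "(\<Sum>j<K. digit p m j * p ^ j) = m mod p ^ K"
proof (induction K arbitrary: m)
  case (Suc K)
  have "(\<Sum>j<Suc K. digit p m j * p ^ j) = m mod p + p * (\<Sum>j<K. digit p (m div p) j * p ^ j)"
    unfolding sum.lessThan_Suc_shift by (simp add: digit_Suc digit_0 sum_distrib_left ac_simps)
  also have "\<dots> = m mod (p * p ^ K)"
    by (simp add: Suc.IH mod_mult2_eq)
  finally show ?case by simp
qed simp

lemma sum_digits_atMost: "m < p ^ Suc k \<Longrightarrow> (\<Sum>j\<le>k. digit p m j * p ^ j) = m"
  using sum_digits_lessThan[of p m "Suc k"] by (simp add: lessThan_Suc_atMost)

lemma digit_sum_powers:
  assumes "\<forall>j<K. b j < p" "i < K"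
  shows "digit p (\<Sum>j<K. b j * p ^ j) i = b i"
  using assms
proof (induction i arbitrary: K b)
  case 0
  then obtain K' where K: "K = Suc K'" by (cases K) auto
  have "(\<Sum>j<K. b j * p ^ j) = b 0 + p * (\<Sum>j<K'. b (Suc j) * p ^ j)"
    unfolding K sum.lessThan_Suc_shift by (simp add: sum_distrib_left ac_simps)
  then show ?case using 0 by (simp add: digit_0)
next
  case (Suc i)
  then obtain K' where K: "K = Suc K'" by (cases K) auto
  have "b 0 < p" using Suc.prems K by simp
  moreover have "(\<Sum>j<K. b j * p ^ j) = b 0 + p * (\<Sum>j<K'. b (Suc j) * p ^ j)"
    unfolding K sum.lessThan_Suc_shift by (simp add: sum_distrib_left ac_simps)
  ultimately have "(\<Sum>j<K. b j * p ^ j) div p = (\<Sum>j<K'. b (Suc j) * p ^ j)"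
    by simp
  then show ?case
    using Suc.IH[of K' "\<lambda>j. b (Suc j)"] Suc.prems K by (simp add: digit_Suc)
qed

lemma sum_list_eq_sum_digit_sums:
  "\<forall>b\<in>set bs. b < p ^ Suc k \<Longrightarrow> sum_list bs = (\<Sum>j\<le>k. sum_list (map (\<lambda>b. digit p b j) bs) * p ^ j)"
  by (induction bs) (simp_all add: sum_digits_atMost sum.distrib distrib_right)

section \<open>Lucas' theorem for multinomial coefficients\<close>

lemma lucas_pascal_cong:
  fixes p :: nat
  assumes p: "prime p"
  defines "L \<equiv> \<lambda>N R. (N div p choose R div p) * (N mod p choose R mod p)"
  shows "[L (Suc N) (Suc R) = L N R + L N (Suc R)] (mod p)"
proof -
  have p1: "p > 1" using p prime_gt_1_nat by blast
  define a s b t where "a = N div p" "s = N mod p" "b = R div p" "t = R mod p"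
  have st: "s < p" "t < p" using p1 by (simp_all add: a_s_b_t_def)
  have NR: "N div p = a" "N mod p = s" "R div p = b" "R mod p = t"
    by (simp_all add: a_s_b_t_def)
  have SucN: "Suc N div p = (if Suc s = p then Suc a else a)" "Suc N mod p = (if Suc s = p then 0 else Suc s)"
    using p1 by (simp_all add: a_s_b_t_def div_Suc mod_Suc)
  have SucR: "Suc R div p = (if Suc t = p then Suc b else b)" "Suc R mod p = (if Suc t = p then 0 else Suc t)"
    using p1 by (simp_all add: a_s_b_t_def div_Suc mod_Suc)
  note L = L_def NR SucN SucR
  show ?thesis
  proof (cases "Suc s = p")
    case s: True
    show ?thesis
    proof (cases "Suc t = p")
      case True
      then have "s = t" using s by simp
      then have "s choose t = 1" by simp
      then show ?thesis using s True unfolding L by simp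
    next
      case False
      \<comment> \<open>only here is the congruence not an equation: \<open>N + 1\<close> carries into the next digit\<close>
      have "(s choose t) + (s choose Suc t) = p choose Suc t" using s by auto
      moreover have "p dvd (p choose Suc t)" using dvd_choose_prime[OF _ _ _ p] st False by simp
      ultimately have "p dvd L N R + L N (Suc R)"
        using s False unfolding L by (simp flip: distrib_left)
      then have "[L N R + L N (Suc R) = 0] (mod p)" by (simp add: cong_0_iff)
      then show ?thesis using s False unfolding L by (simp add: cong_sym_eq)
    qed
  next
    case s: False
    show ?thesis
    proof (cases "Suc t = p")
      case True
      then have "s < t" using s st by simp
      then show ?thesis using s True unfolding L by (simp add: binomial_eq_0)
    next
      case False
      then show ?thesis using s unfolding L by (simp add: distrib_left)
    qed
  qed
qed

theorem lucas_binomial: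
  fixes p :: nat
  assumes "prime p"
  shows "[N choose R = (N div p choose R div p) * (N mod p choose R mod p)] (mod p)"
proof (induction N arbitrary: R)
  case 0
  show ?case
  proof (cases "R < p")
    case False
    then have "R div p \<noteq> 0" using prime_gt_0_nat[OF assms] by (simp add: div_eq_0_iff)
    moreover have "0 choose R = 0" using False prime_gt_0_nat[OF assms] by (simp add: binomial_eq_0)
    ultimately show ?thesis by (simp add: binomial_eq_0)
  qed simp
next
  case (Suc N)
  show ?case
  proof (cases R)
    case 0
    then show ?thesis by simp
  next
    case (Suc R')
    have "[Suc N choose Suc R' = (N div p choose R' div p) * (N mod p choose R' mod p)
        + (N div p choose Suc R' div p) * (N mod p choose Suc R' mod p)] (mod p)"
      unfolding binomial_Suc_Suc by (intro cong_add Suc.IH)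
    then show ?thesis
      unfolding Suc using cong_trans cong_sym lucas_pascal_cong[OF assms] by blast
  qed
qed

lemma prod_fact_dvd_fact_sum_list: "prod_list (map fact ms) dvd (fact (sum_list ms) :: nat)"
proof (induction ms)
  case (Cons a as)
  have "fact (a + sum_list as) = ((a + sum_list as) choose a) * (fact a * fact (sum_list as) :: nat)"
    using binomial_fact_lemma[of a "a + sum_list as"] by (simp add: ac_simps)
  then show ?case using Cons.IH by (simp add: mult_dvd_mono)
qed simp

lemma multinom_Nil: "multinom m [] = (if m = 0 then 1 else 0)"
  by (simp add: multinom_def)

lemma multinom_Cons: "multinom m (a # as) = (m choose a) * multinom (m - a) as"
proof (cases "a \<le> m \<and> sum_list as = m - a")
  case True
  then have am: "a \<le> m" and sum_as: "sum_list as = m - a" by auto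
  obtain K :: nat where K: "fact (m - a) = prod_list (map fact as) * K"
    using prod_fact_dvd_fact_sum_list[of as] sum_as by (metis dvdE)
  have pos: "prod_list (map fact as) > (0::nat)"
    by (induction as) auto
  have "fact m = (m choose a) * fact a * (fact (m - a) :: nat)"
    using binomial_fact_lemma[OF am] by (simp add: algebra_simps)
  then have "multinom m (a # as) = ((m choose a) * K * (fact a * prod_list (map fact as))) div (fact a * prod_list (map fact as))"
    using True K by (simp add: multinom_def algebra_simps)
  also have "\<dots> = (m choose a) * K" using pos by simp
  also have "K = multinom (m - a) as" using K sum_as pos by (simp add: multinom_def)
  finally show ?thesis .
qed (auto simp: multinom_def)

lemma lucas_multinom_step:
  fixes p :: nat
  assumes p: "prime p"
  shows "[multinom n bs = multinom (n div p) (map (\<lambda>b. b div p) bs) *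
            multinom (n mod p) (map (\<lambda>b. b mod p) bs)] (mod p)"
proof (induction bs arbitrary: n)
  case Nil
  have "n = 0 \<longleftrightarrow> n div p = 0 \<and> n mod p = 0"
    by (metis div_mult_mod_eq div_0 mod_0)
  then show ?case by (simp add: multinom_Nil)
next
  case (Cons a as)
  have p0: "p > 0" using p prime_gt_0_nat by blast
  have lucas: "[multinom n (a # as) = (n div p choose a div p) * (n mod p choose a mod p) *
      (multinom ((n - a) div p) (map (\<lambda>b. b div p) as) * multinom ((n - a) mod p) (map (\<lambda>b. b mod p) as))] (mod p)"
    unfolding multinom_Cons by (rule cong_mult[OF lucas_binomial[OF p] Cons.IH])
  show ?case
  proof (cases "a mod p \<le> n mod p \<and> a div p \<le> n div p")
    case True
    moreover have "(n div p - a div p) * p = n div p * p - a div p * p"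
      by (simp add: diff_mult_distrib)
    ultimately have "n - a = (n div p - a div p) * p + (n mod p - a mod p)"
      using div_mult_mod_eq[of n p] div_mult_mod_eq[of a p] mult_le_mono1[of "a div p" "n div p" p]
      by linarith
    then have "(n - a) div p = n div p - a div p" "(n - a) mod p = n mod p - a mod p"
      using p0 by (simp_all add: less_imp_diff_less)
    then show ?thesis using lucas by (simp add: multinom_Cons ac_simps)
  next
    case False
    then show ?thesis using lucas by (auto simp: multinom_Cons binomial_eq_0 not_le)
  qed
qed

theorem lucas_multinom:
  fixes p :: nat
  assumes p: "prime p"
  shows "n < p ^ Suc k \<Longrightarrow> \<forall>b\<in>set bs. b < p ^ Suc k \<Longrightarrow>
    [multinom n bs = (\<Prod>j\<le>k. multinom (digit p n j) (map (\<lambda>b. digit p b j) bs))] (mod p)"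
proof (induction k arbitrary: n bs)
  case 0
  then show ?case by (simp add: digit_def map_idI)
next
  case (Suc k)
  have "\<forall>b\<in>set (map (\<lambda>b. b div p) bs). b < p ^ Suc k" "n div p < p ^ Suc k"
    using Suc.prems by (auto simp: div_less_iff_less_mult prime_gt_0_nat[OF p] mult.commute)
  from Suc.IH[OF this(2,1)]
  have "[multinom (n div p) (map (\<lambda>b. b div p) bs)
      = (\<Prod>j\<le>k. multinom (digit p n (Suc j)) (map (\<lambda>b. digit p b (Suc j)) bs))] (mod p)"
    by (simp add: digit_Suc o_def)
  then have "[multinom (n div p) (map (\<lambda>b. b div p) bs) * multinom (n mod p) (map (\<lambda>b. b mod p) bs)
      = (\<Prod>j\<le>k. multinom (digit p n (Suc j)) (map (\<lambda>b. digit p b (Suc j)) bs))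
        * multinom (n mod p) (map (\<lambda>b. b mod p) bs)] (mod p)"
    by (rule cong_mult[OF _ cong_refl])
  moreover have "(\<Prod>j\<le>k. multinom (digit p n (Suc j)) (map (\<lambda>b. digit p b (Suc j)) bs))
        * multinom (n mod p) (map (\<lambda>b. b mod p) bs)
      = (\<Prod>j\<le>Suc k. multinom (digit p n j) (map (\<lambda>b. digit p b j) bs))"
    unfolding prod.atMost_Suc_shift by (simp add: digit_def)
  ultimately show ?case using cong_trans[OF lucas_multinom_step[OF p]] by simp
qed

section \<open>Numbers digitwise dominated by n\<close>

definition digit_dominated :: "nat \<Rightarrow> nat \<Rightarrow> nat \<Rightarrow> nat set" where
  "digit_dominated p k n = {(\<Sum>j\<le>k. b j * p ^ j) | b. \<forall>j\<le>k. b j \<le> digit p n j}"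

lemma Pset_eq: "Pset p k n = digit_dominated p k n - {0, n}"
  by (simp add: Pset_def digit_dominated_def)

lemma digit_dominated_le:
  assumes "n < p ^ Suc k" "m \<in> digit_dominated p k n"
  shows "m \<le> n"
proof -
  obtain b where m: "m = (\<Sum>j\<le>k. b j * p ^ j)" and b: "\<forall>j\<le>k. b j \<le> digit p n j"
    using assms(2) unfolding digit_dominated_def by blast
  have "m \<le> (\<Sum>j\<le>k. digit p n j * p ^ j)"
    unfolding m using b by (intro sum_mono) simp
  then show ?thesis using sum_digits_atMost[OF assms(1)] by simp
qed

lemma digits_bounded_less:
  assumes "p > 0" "\<forall>j\<le>k. b j \<le> digit p n j"
  shows "\<forall>j<Suc k. b j < p"
  using assms digit_less[of p n] by (meson le_less_trans less_Suc_eq_le)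

lemma mem_digit_dominated_iff:
  assumes p: "p > 1" and n: "n < p ^ Suc k"
  shows "m \<in> digit_dominated p k n \<longleftrightarrow> m \<le> n \<and> (\<forall>j\<le>k. digit p m j \<le> digit p n j)"
proof
  assume m: "m \<in> digit_dominated p k n"
  then obtain b where m_eq: "m = (\<Sum>j\<le>k. b j * p ^ j)" and b: "\<forall>j\<le>k. b j \<le> digit p n j"
    unfolding digit_dominated_def by blast
  have "digit p m j = b j" if "j \<le> k" for j
    using digit_sum_powers[OF digits_bounded_less[OF _ b], of j] p that
    by (simp add: m_eq lessThan_Suc_atMost)
  then show "m \<le> n \<and> (\<forall>j\<le>k. digit p m j \<le> digit p n j)"
    using b digit_dominated_le[OF n m] by simp
next
  assume m: "m \<le> n \<and> (\<forall>j\<le>k. digit p m j \<le> digit p n j)"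
  then have "m < p ^ Suc k" using n by simp
  then show "m \<in> digit_dominated p k n"
    unfolding digit_dominated_def using m sum_digits_atMost[of m p k]
    by (auto intro!: exI[of _ "digit p m"])
qed

lemma card_digit_dominated:
  assumes p: "p > 1"
  shows "card (digit_dominated p k n) = (\<Prod>j\<le>k. digit p n j + 1)"
proof -
  let ?f = "\<lambda>b. \<Sum>j\<le>k. b j * p ^ j"
  let ?B = "PiE {..k} (\<lambda>j. {..digit p n j})"
  have image: "digit_dominated p k n = ?f ` ?B"
  proof
    show "digit_dominated p k n \<subseteq> ?f ` ?B"
    proof
      fix m assume "m \<in> digit_dominated p k n"
      then obtain b where m: "m = ?f b" and b: "\<forall>j\<le>k. b j \<le> digit p n j"
        unfolding digit_dominated_def by blast
      have "m = ?f (restrict b {..k})" unfolding m by (intro sum.cong) auto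
      moreover have "restrict b {..k} \<in> ?B" using b by (simp add: PiE_iff)
      ultimately show "m \<in> ?f ` ?B" by blast
    qed
  qed (auto simp: digit_dominated_def PiE_def Pi_def)
  have "inj_on ?f ?B"
  proof (rule inj_onI)
    fix b c assume b: "b \<in> ?B" and c: "c \<in> ?B" and eq: "?f b = ?f c"
    have "\<forall>j\<le>k. b j \<le> digit p n j" "\<forall>j\<le>k. c j \<le> digit p n j"
      using b c by (auto simp: PiE_iff)
    then have "\<forall>j<Suc k. b j < p" "\<forall>j<Suc k. c j < p"
      using p by (simp_all add: digits_bounded_less)
    then have "b j = c j" if "j \<le> k" for j
      using digit_sum_powers[of "Suc k" b p j] digit_sum_powers[of "Suc k" c p j] eq that
      by (simp add: lessThan_Suc_atMost)
    then show "b = c" using b c by (intro PiE_ext) auto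
  qed
  then show ?thesis unfolding image by (simp add: card_image card_PiE)
qed

lemma Pset_subset:
  assumes "n < p ^ Suc k"
  shows "Pset p k n \<subseteq> {1..n-1}"
  using digit_dominated_le[OF assms] unfolding Pset_eq by force

lemma card_Pset:
  assumes p: "p > 1" and n: "n < p ^ Suc k" "n \<noteq> 0"
  shows "card (Pset p k n) + 2 = (\<Prod>j\<le>k. digit p n j + 1)"
proof -
  have "{0, n} \<subseteq> digit_dominated p k n"
    by (simp add: mem_digit_dominated_iff[OF p n(1)] digit_def)
  moreover have "finite (digit_dominated p k n)"
    by (rule finite_subset[of _ "{..n}"]) (auto dest: digit_dominated_le[OF n(1)])
  ultimately show ?thesis
    using n(2) card_mono[of "digit_dominated p k n" "{0, n}"]
    by (simp add: Pset_eq card_Diff_subset card_digit_dominated[OF p])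
qed

lemma card_Pset_complement:
  assumes p: "p > 1" and n: "n < p ^ Suc k" "2 \<le> n"
  shows "card ({1..n-1} - Pset p k n) = n + 1 - (\<Prod>j\<le>k. digit p n j + 1)"
proof -
  have "card (Pset p k n) \<le> n - 1"
    using card_mono[OF _ Pset_subset[OF n(1)]] by simp
  then show ?thesis
    using card_Pset[OF p n(1)] n(2) Pset_subset[OF n(1)]
    by (simp add: card_Diff_subset finite_subset)
qed

lemma Pset_eq_iff_low_digits_max:
  assumes p: "p > 1" and n: "p ^ k \<le> n" "n < p ^ Suc k"
  shows "Pset p k n = {1..n-1} \<longleftrightarrow> (\<forall>j<k. digit p n j = p - 1)"
proof
  assume P: "Pset p k n = {1..n-1}"
  show "\<forall>j<k. digit p n j = p - 1"
  proof (rule ccontr)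
    assume "\<not> (\<forall>j<k. digit p n j = p - 1)"
    then obtain j where j: "j < k" "digit p n j \<noteq> p - 1" by blast
    then have less: "digit p n j + 1 < p" using digit_less[of p n j] p by linarith
    define m where "m = (digit p n j + 1) * p ^ j"
    have "m div p ^ j = digit p n j + 1"
      unfolding m_def using p by simp
    then have digit_m: "digit p m j = digit p n j + 1"
      using less by (simp add: digit_def[of p m])
    have "0 < p ^ j" using p by simp
    moreover have "p ^ j \<le> m" unfolding m_def by simp
    moreover have "m < p * p ^ j" unfolding m_def using less p by (intro mult_strict_right_mono) simp_all
    moreover have "p * p ^ j \<le> p ^ k" using j p by (simp flip: power_Suc)
    ultimately have "1 \<le> m \<and> m < n" using n(1) by linarith
    then have "m \<in> {1..n-1}" by auto
    then have "m \<in> digit_dominated p k n" using P unfolding Pset_eq by blast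
    then have "digit p m j \<le> digit p n j"
      using less_imp_le[OF j(1)] by (simp add: mem_digit_dominated_iff[OF p n(2)])
    then show False using digit_m by simp
  qed
next
  assume low: "\<forall>j<k. digit p n j = p - 1"
  have "m \<in> Pset p k n" if m: "m \<in> {1..n-1}" for m
  proof -
    have "digit p m j \<le> digit p n j" if "j \<le> k" for j
    proof (cases "j = k")
      case True
      have "digit p m k \<le> m div p ^ k" by (simp add: digit_def)
      also have "\<dots> \<le> n div p ^ k" using m by (intro div_le_mono) auto
      also have "\<dots> = digit p n k" using n p by (simp add: digit_def div_less_iff_less_mult mult.commute)
      finally show ?thesis using True by simp
    next
      case False
      then show ?thesis using that low digit_less[of p m j] p by simp
    qed
    then show ?thesis
      using m by (auto simp: Pset_eq mem_digit_dominated_iff[OF p n(2)])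
  qed
  then show "Pset p k n = {1..n-1}" using Pset_subset[OF n(2)] by auto
qed

section \<open>Compositions and their descent sets\<close>

lemma comp_descents_eq_image: "comp_descents \<alpha> = (\<lambda>j. sum_list (take j \<alpha>)) ` {1..<length \<alpha>}"
  by (auto simp: comp_descents_def)

lemma comp_descents_Nil [simp]: "comp_descents [] = {}"
  by (simp add: comp_descents_def)

lemma comp_descents_Cons:
  "comp_descents (a # as) = (if as = [] then {} else insert a ((+) a ` comp_descents as))"
proof -
  have "comp_descents (a # as) = (\<lambda>j. sum_list (take (Suc j) (a # as))) ` {0..<length as}"
    unfolding comp_descents_eq_image by (simp add: image_image flip: image_Suc_atLeastLessThan)
  also have "\<dots> = (\<lambda>j. a + sum_list (take j as)) ` {0..<length as}"
    by simp
  also have "\<dots> = (if as = [] then {} else insert a ((+) a ` comp_descents as))"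
  proof (cases "as = []")
    case False
    then have "{0..<length as} = insert 0 {1..<length as}" by auto
    then show ?thesis using False by (simp add: comp_descents_eq_image image_image)
  qed simp
  finally show ?thesis .
qed

lemma Nil_mem_compositions_iff: "[] \<in> compositions n \<longleftrightarrow> n = 0"
  by (auto simp: compositions_def is_composition_def)

lemma Cons_mem_compositions_iff:
  "a # as \<in> compositions n \<longleftrightarrow> 0 < a \<and> a \<le> n \<and> as \<in> compositions (n - a)"
  by (auto simp: compositions_def is_composition_def)

lemma compositions_0: "compositions 0 = {[]}"
proof -
  have "\<alpha> \<in> compositions 0 \<Longrightarrow> \<alpha> = []" for \<alpha>
    by (cases \<alpha>) (simp_all add: Cons_mem_compositions_iff)
  then show ?thesis using Nil_mem_compositions_iff by blast
qed

lemma comp_descents_Cons_ge: "x \<in> comp_descents (a # as) \<Longrightarrow> a \<le> x"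
  by (auto simp: comp_descents_Cons split: if_splits)

lemma comp_descents_subset: "\<alpha> \<in> compositions n \<Longrightarrow> comp_descents \<alpha> \<subseteq> {1..n-1}"
proof (induction \<alpha> arbitrary: n)
  case (Cons a as)
  then have a: "0 < a" "a \<le> n" and as: "as \<in> compositions (n - a)"
    by (simp_all add: Cons_mem_compositions_iff)
  show ?case
  proof (cases "as = []")
    case False
    then have "as \<notin> compositions 0" by (simp add: compositions_0)
    then have "n - a \<noteq> 0" using as by metis
    then have "a < n" by simp
    moreover have "a + x \<in> {1..n-1}" if "x \<in> comp_descents as" for x
    proof -
      have "x \<in> {1..n - a - 1}" using Cons.IH[OF as] that by blast
      then show ?thesis by auto
    qed
    then have "(+) a ` comp_descents as \<subseteq> {1..n-1}" by blast
    ultimately show ?thesis using a False by (simp add: comp_descents_Cons)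
  qed (simp add: comp_descents_Cons)
qed simp

lemma comp_descents_inj:
  "\<alpha> \<in> compositions n \<Longrightarrow> \<beta> \<in> compositions n \<Longrightarrow> comp_descents \<alpha> = comp_descents \<beta> \<Longrightarrow> \<alpha> = \<beta>"
proof (induction \<alpha> arbitrary: n \<beta>)
  case Nil
  then show ?case by (simp add: Nil_mem_compositions_iff compositions_0)
next
  case (Cons a as)
  from Cons.prems(1) have a: "0 < a" "a \<le> n" and as: "as \<in> compositions (n - a)"
    by (simp_all add: Cons_mem_compositions_iff)
  then obtain b bs where \<beta>: "\<beta> = b # bs"
    using Cons.prems(2) by (cases \<beta>) (auto simp: Nil_mem_compositions_iff)
  from Cons.prems(2) have b: "0 < b" "b \<le> n" and bs: "bs \<in> compositions (n - b)"
    by (simp_all add: \<beta> Cons_mem_compositions_iff)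
  have eq: "comp_descents (a # as) = comp_descents (b # bs)" using Cons.prems(3) \<beta> by simp
  show ?case
  proof (cases "as = []")
    case True
    then have "bs = []" using eq by (simp add: comp_descents_Cons split: if_splits)
    then show ?thesis using True \<beta> as bs a b by (simp add: Nil_mem_compositions_iff)
  next
    case False
    then have "bs \<noteq> []" using eq by (simp add: comp_descents_Cons split: if_splits)
    have "a \<in> comp_descents (a # as)" "b \<in> comp_descents (b # bs)"
      using False \<open>bs \<noteq> []\<close> by (simp_all add: comp_descents_Cons)
    then have "a \<in> comp_descents (b # bs)" "b \<in> comp_descents (a # as)"
      using eq by simp_all
    then have "a = b" using comp_descents_Cons_ge by (metis le_antisym)
    have "0 \<notin> comp_descents as" "0 \<notin> comp_descents bs"
      using comp_descents_subset[OF as] comp_descents_subset[OF bs] by auto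
    then have "(+) a ` comp_descents as = comp_descents (a # as) - {a}"
              "(+) b ` comp_descents bs = comp_descents (b # bs) - {b}"
      using False \<open>bs \<noteq> []\<close> by (auto simp: comp_descents_Cons)
    then have "(+) a ` comp_descents as = (+) a ` comp_descents bs"
      using eq \<open>a = b\<close> by simp
    then have "comp_descents as = comp_descents bs"
      by (simp add: inj_image_eq_iff inj_def)
    then show ?thesis using Cons.IH[OF as] bs \<beta> \<open>a = b\<close> by simp
  qed
qed

lemma comp_descents_surj: "U \<subseteq> {1..n-1} \<Longrightarrow> \<exists>\<alpha>\<in>compositions n. comp_descents \<alpha> = U"
proof (induction n arbitrary: U rule: less_induct)
  case (less n)
  show ?case
  proof (cases "U = {}")
    case True
    show ?thesis
    proof (cases "n = 0")
      case True
      then show ?thesis using \<open>U = {}\<close> by (intro bexI[of _ "[]"]) (simp_all add: compositions_0)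
    next
      case False
      then show ?thesis using \<open>U = {}\<close>
        by (intro bexI[of _ "[n]"]) (simp_all add: comp_descents_Cons Cons_mem_compositions_iff compositions_0)
    qed
  next
    case False
    define a where "a = Min U"
    have fin: "finite U" using less.prems finite_subset by blast
    have aU: "a \<in> U" and amin: "\<And>x. x \<in> U \<Longrightarrow> a \<le> x"
      using False fin by (simp_all add: a_def)
    have "a \<in> {1..n-1}" using aU less.prems by blast
    then have a: "0 < a" "a < n" by auto
    define U' where "U' = (\<lambda>x. x - a) ` (U - {a})"
    have "x - a \<in> {1..(n - a) - 1}" if "x \<in> U - {a}" for x
      using that less.prems amin[of x] by auto
    then have "U' \<subseteq> {1..(n - a) - 1}" unfolding U'_def by blast
    then obtain \<alpha>' where \<alpha>': "\<alpha>' \<in> compositions (n - a)" "comp_descents \<alpha>' = U'"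
      using less.IH[of "n - a" U'] a by auto
    have "\<alpha>' \<noteq> []" using \<alpha>'(1) a by (auto simp: Nil_mem_compositions_iff)
    moreover have "(+) a ` U' = U - {a}"
    proof -
      have "a + (x - a) = x" if "x \<in> U - {a}" for x using amin[of x] that by simp
      then show ?thesis unfolding U'_def image_image by simp
    qed
    ultimately have "comp_descents (a # \<alpha>') = U"
      using \<alpha>'(2) aU by (auto simp: comp_descents_Cons)
    moreover have "a # \<alpha>' \<in> compositions n" using \<alpha>'(1) a by (simp add: Cons_mem_compositions_iff)
    ultimately show ?thesis by blast
  qed
qed

lemma bij_betw_comp_descents: "bij_betw comp_descents (compositions n) (Pow {1..n-1})"
  unfolding bij_betw_def
proof
  show "inj_on comp_descents (compositions n)"
    by (meson comp_descents_inj inj_onI)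
  show "comp_descents ` compositions n = Pow {1..n - 1}"
  proof
    show "comp_descents ` compositions n \<subseteq> Pow {1..n - 1}"
      using comp_descents_subset by blast
    show "Pow {1..n - 1} \<subseteq> comp_descents ` compositions n"
      using comp_descents_surj by blast
  qed
qed

lemma finite_compositions: "finite (compositions n)"
  using bij_betw_finite[OF bij_betw_comp_descents[of n]] by simp

lemma sum_list_take_le: "sum_list (take t xs) \<le> (sum_list xs :: nat)"
  by (metis append_take_drop_id sum_list_append le_add1)

lemma comp_descents_subset_Pset:
  assumes p: "p > 1" and n: "n < p ^ Suc k" and \<beta>: "\<beta> \<in> compositions n"
    and carry_free: "\<forall>j\<le>k. (\<Sum>b\<leftarrow>\<beta>. digit p b j) = digit p n j"
  shows "comp_descents \<beta> \<subseteq> Pset p k n"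
proof
  fix x assume x: "x \<in> comp_descents \<beta>"
  then obtain t where x_eq: "x = sum_list (take t \<beta>)"
    unfolding comp_descents_def by blast
  define c where "c = (\<lambda>j. sum_list (map (\<lambda>b. digit p b j) (take t \<beta>)))"
  have "\<forall>b\<in>set \<beta>. b \<le> n" using \<beta> by (auto simp: compositions_def is_composition_def member_le_sum_list)
  then have "\<forall>b\<in>set (take t \<beta>). b < p ^ Suc k" using n by (meson in_set_takeD le_less_trans)
  then have "x = (\<Sum>j\<le>k. c j * p ^ j)"
    unfolding x_eq c_def by (rule sum_list_eq_sum_digit_sums)
  moreover have "c j \<le> digit p n j" if "j \<le> k" for j
    using carry_free that sum_list_take_le[of t "map (\<lambda>b. digit p b j) \<beta>"] by (simp add: c_def take_map)
  ultimately have "x \<in> digit_dominated p k n"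
    unfolding digit_dominated_def by blast
  moreover have "x \<in> {1..n-1}" using comp_descents_subset[OF \<beta>] x by blast
  ultimately show "x \<in> Pset p k n" unfolding Pset_eq by auto
qed

section \<open>Permutations with descents in a given set\<close>

text \<open>Positions are counted from 1, as in descent sets: position \<open>Suc m\<close> compares the entries
  with (0-based) indices \<open>m\<close> and \<open>Suc m\<close>.\<close>

definition descents_within :: "nat set \<Rightarrow> 'a::linorder list \<Rightarrow> bool" where
  "descents_within U xs \<longleftrightarrow> (\<forall>m. Suc m < length xs \<longrightarrow> Suc m \<notin> U \<longrightarrow> xs ! m < xs ! Suc m)"

lemma descents_within_cong:
  "(\<And>i. 0 < i \<Longrightarrow> i < length xs \<Longrightarrow> i \<in> U \<longleftrightarrow> i \<in> V) \<Longrightarrow>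
    descents_within U xs \<longleftrightarrow> descents_within V xs"
  unfolding descents_within_def by auto

lemma descents_within_empty: "descents_within {} xs \<longleftrightarrow> sorted_wrt (<) xs"
  unfolding descents_within_def by (simp add: sorted_wrt_iff_nth_Suc_transp transp_def)

lemma descents_within_append:
  assumes "length ys \<in> U"
  shows "descents_within U (ys @ zs) \<longleftrightarrow>
    descents_within U ys \<and> descents_within {x. length ys + x \<in> U} zs"
proof -
  let ?xs = "ys @ zs" and ?l = "length ys"
  have nth_ys: "?xs ! m = ys ! m" "?xs ! Suc m = ys ! Suc m" if "Suc m < ?l" for m
    using that by (simp_all add: nth_append_left)
  have nth_zs: "?xs ! (?l + m) = zs ! m" "?xs ! Suc (?l + m) = zs ! Suc m" for m
    by (simp_all flip: add_Suc_right)
  show ?thesis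
  proof (intro iffI conjI)
    assume H: "descents_within U ?xs"
    show "descents_within U ys" unfolding descents_within_def
    proof (intro allI impI)
      fix m assume "Suc m < ?l" "Suc m \<notin> U"
      then show "ys ! m < ys ! Suc m"
        using H[unfolded descents_within_def, rule_format, of m] by (simp add: nth_ys)
    qed
    show "descents_within {x. ?l + x \<in> U} zs" unfolding descents_within_def
    proof (intro allI impI)
      fix m assume "Suc m < length zs" "Suc m \<notin> {x. ?l + x \<in> U}"
      then show "zs ! m < zs ! Suc m"
        using H[unfolded descents_within_def, rule_format, of "?l + m"] by (simp add: nth_zs)
    qed
  next
    assume H: "descents_within U ys \<and> descents_within {x. ?l + x \<in> U} zs"
    show "descents_within U ?xs" unfolding descents_within_def
    proof (intro allI impI)
      fix m assume m: "Suc m < length ?xs" "Suc m \<notin> U"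
      then have "Suc m \<noteq> ?l" using assms by auto
      then have "Suc m < ?l \<or> ?l \<le> m" by linarith
      then consider "Suc m < ?l" | m' where "m = ?l + m'" using le_Suc_ex by blast
      then show "?xs ! m < ?xs ! Suc m"
      proof cases
        case 1
        then show ?thesis using H m unfolding descents_within_def by (simp add: nth_ys)
      next
        case 2
        then show ?thesis using H m unfolding descents_within_def by (simp add: nth_zs)
      qed
    qed
  qed
qed

lemma descents_within_comp_descents_Cons:
  assumes "length ys = b" and "bs = [] \<Longrightarrow> zs = []"
  shows "descents_within (comp_descents (b # bs)) (ys @ zs) \<longleftrightarrow>
    sorted_wrt (<) ys \<and> descents_within (comp_descents bs) zs"
proof (cases "bs = []")
  case True
  then show ?thesis using assms by (simp add: comp_descents_Cons descents_within_empty)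
next
  case False
  let ?U = "insert b ((+) b ` comp_descents bs)"
  have "descents_within ?U ys \<longleftrightarrow> descents_within {} ys"
    using assms(1) by (intro descents_within_cong) auto
  moreover have "descents_within {x. b + x \<in> ?U} zs \<longleftrightarrow> descents_within (comp_descents bs) zs"
    by (intro descents_within_cong) auto
  ultimately show ?thesis
    using False assms(1) descents_within_append[of ys ?U zs]
    by (simp add: comp_descents_Cons descents_within_empty)
qed

definition desc_arrangements :: "'a::linorder set \<Rightarrow> nat list \<Rightarrow> 'a list set" where
  "desc_arrangements A \<beta> = {xs \<in> permutations_of_set A. descents_within (comp_descents \<beta>) xs}"

lemma finite_desc_arrangements [simp]: "finite (desc_arrangements A \<beta>)"
  by (simp add: desc_arrangements_def)

lemma desc_arrangements_Cons:
  assumes A: "finite A" "card A = b + sum_list bs"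
  shows "desc_arrangements A (b # bs) = (\<lambda>(B, zs). sorted_list_of_set B @ zs) `
    (SIGMA B:{B. B \<subseteq> A \<and> card B = b}. desc_arrangements (A - B) bs)"
    (is "_ = ?glue ` ?S")
proof
  show "desc_arrangements A (b # bs) \<subseteq> ?glue ` ?S"
  proof
    fix xs assume xs: "xs \<in> desc_arrangements A (b # bs)"
    define ys where "ys = take b xs"
    define zs where "zs = drop b xs"
    have dist: "distinct xs" and set_xs: "set xs = A"
      and desc: "descents_within (comp_descents (b # bs)) (ys @ zs)"
      using xs by (simp_all add: desc_arrangements_def permutations_of_set_def ys_def zs_def)
    have len: "length xs = b + sum_list bs" using dist set_xs A by (metis distinct_card)
    then have "length ys = b" "bs = [] \<Longrightarrow> zs = []" by (simp_all add: ys_def zs_def)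
    then have sorted: "sorted_wrt (<) ys" and zs: "descents_within (comp_descents bs) zs"
      using desc descents_within_comp_descents_Cons by blast+
    have xs_eq: "xs = ys @ zs" by (simp add: ys_def zs_def)
    have "set ys \<subseteq> A" using set_xs set_take_subset unfolding ys_def by metis
    moreover have "card (set ys) = b" using dist len by (simp add: ys_def distinct_card)
    ultimately have "set ys \<in> {B. B \<subseteq> A \<and> card B = b}" by simp
    moreover have "zs \<in> desc_arrangements (A - set ys) bs"
      using dist set_xs zs unfolding xs_eq by (auto simp: desc_arrangements_def permutations_of_set_def)
    moreover have "ys = sorted_list_of_set (set ys)"
      using sorted by (simp add: sorted_list_of_set_sort_remdups strict_sorted_iff distinct_remdups_id sorted_sort_id)
    ultimately show "xs \<in> ?glue ` ?S" unfolding xs_eq by force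
  qed
next
  show "?glue ` ?S \<subseteq> desc_arrangements A (b # bs)"
  proof
    fix xs assume "xs \<in> ?glue ` ?S"
    then obtain B zs where B: "B \<subseteq> A" "card B = b" and zs: "zs \<in> desc_arrangements (A - B) bs"
      and xs: "xs = sorted_list_of_set B @ zs" by auto
    have fin: "finite B" using B A finite_subset by blast
    have "bs = [] \<Longrightarrow> zs = []"
    proof -
      assume "bs = []"
      then have "B = A" using A B card_subset_eq[OF A(1) B(1)] by simp
      then show "zs = []" using zs by (simp add: desc_arrangements_def permutations_of_set_def)
    qed
    then have "descents_within (comp_descents (b # bs)) (sorted_list_of_set B @ zs)"
      using zs fin B by (subst descents_within_comp_descents_Cons) (auto simp: desc_arrangements_def)
    then show "xs \<in> desc_arrangements A (b # bs)"
      using zs fin B unfolding xs by (auto simp: desc_arrangements_def permutations_of_set_def)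
  qed
qed

lemma card_desc_arrangements:
  "finite A \<Longrightarrow> card A = sum_list \<beta> \<Longrightarrow> card (desc_arrangements A \<beta>) = multinom (card A) \<beta>"
proof (induction \<beta> arbitrary: A)
  case Nil
  then have "desc_arrangements A [] = {[]}"
    by (auto simp: desc_arrangements_def descents_within_def)
  then show ?case using Nil by (simp add: multinom_Nil)
next
  case (Cons b bs)
  let ?SB = "{B. B \<subseteq> A \<and> card B = b}"
  let ?glue = "\<lambda>(B, zs). sorted_list_of_set B @ zs"
  let ?S = "SIGMA B:?SB. desc_arrangements (A - B) bs"
  have fin: "finite B" if "B \<in> ?SB" for B using that Cons.prems(1) finite_subset by blast
  have "inj_on ?glue ?S"
  proof (rule inj_onI)
    fix u v assume u: "u \<in> ?S" and v: "v \<in> ?S" and eq: "?glue u = ?glue v"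
    obtain B zs B' zs' where uv: "u = (B, zs)" "v = (B', zs')" by (cases u, cases v)
    then have B: "B \<in> ?SB" "B' \<in> ?SB" using u v by auto
    then have "length (sorted_list_of_set B) = length (sorted_list_of_set B')" by simp
    then have "sorted_list_of_set B = sorted_list_of_set B'" "zs = zs'"
      using eq uv by simp_all
    then have "B = B'" using fin[OF B(1)] fin[OF B(2)] by (metis set_sorted_list_of_set)
    then show "u = v" using uv \<open>zs = zs'\<close> by simp
  qed
  then have "card (desc_arrangements A (b # bs)) = card ?S"
    using Cons.prems by (simp only: desc_arrangements_Cons sum_list.Cons card_image)
  also have "\<dots> = (\<Sum>B\<in>?SB. card (desc_arrangements (A - B) bs))"
    by (rule card_SigmaI) (simp_all add: Cons.prems(1))
  also have "\<dots> = (\<Sum>B\<in>?SB. multinom (card A - b) bs)"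
  proof (rule sum.cong[OF refl])
    fix B assume B: "B \<in> ?SB"
    then have "card (A - B) = card A - b" using fin[OF B] by (simp add: card_Diff_subset)
    then show "card (desc_arrangements (A - B) bs) = multinom (card A - b) bs"
      using Cons.IH[of "A - B"] Cons.prems by simp
  qed
  also have "\<dots> = (card A choose b) * multinom (card A - b) bs"
    using Cons.prems(1) by (simp add: n_subsets)
  finally show ?case by (simp add: multinom_Cons)
qed

lemma bij_betw_permutes_permutations_of_set:
  "bij_betw (\<lambda>w. map w [1..<Suc n]) {w. w permutes {1..n}} (permutations_of_set {1..n})"
proof (rule bij_betw_byWitness[where f' = "\<lambda>xs i. if i \<in> {1..n} then xs ! (i - 1) else i"])
  show "\<forall>w\<in>{w. w permutes {1..n}}. (\<lambda>i. if i \<in> {1..n} then map w [1..<Suc n] ! (i - 1) else i) = w"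
  proof
    fix w assume "w \<in> {w. w permutes {1..n}}"
    then have w: "w permutes {1..n}" by simp
    show "(\<lambda>i. if i \<in> {1..n} then map w [1..<Suc n] ! (i - 1) else i) = w"
    proof
      fix i
      show "(if i \<in> {1..n} then map w [1..<Suc n] ! (i - 1) else i) = w i"
        using w by (cases "i \<in> {1..n}") (auto simp: permutes_not_in nth_map_upt simp del: upt_Suc)
    qed
  qed
  show "\<forall>xs\<in>permutations_of_set {1..n}.
      map (\<lambda>i. if i \<in> {1..n} then xs ! (i - 1) else i) [1..<Suc n] = xs"
  proof
    fix xs assume "xs \<in> permutations_of_set {1..n}"
    then have "length xs = n"
      by (metis card_atLeastAtMost diff_Suc_1 distinct_card permutations_of_setD)
    then show "map (\<lambda>i. if i \<in> {1..n} then xs ! (i - 1) else i) [1..<Suc n] = xs"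
      by (intro nth_equalityI) (simp_all add: nth_map_upt del: upt_Suc)
  qed
  show "(\<lambda>w. map w [1..<Suc n]) ` {w. w permutes {1..n}} \<subseteq> permutations_of_set {1..n}"
  proof clarify
    fix w assume w: "w permutes {1..n}"
    have "set (map w [1..<Suc n]) = {1..n}"
      using permutes_image[OF w] by (simp add: atLeastLessThanSuc_atLeastAtMost del: upt_Suc)
    moreover have "distinct (map w [1..<Suc n])"
      using permutes_inj_on[OF w] by (simp add: distinct_map del: upt_Suc)
    ultimately show "map w [1..<Suc n] \<in> permutations_of_set {1..n}"
      by (simp add: permutations_of_set_def del: upt_Suc)
  qed
  show "(\<lambda>xs i. if i \<in> {1..n} then xs ! (i - 1) else i) ` permutations_of_set {1..n} \<subseteq> {w. w permutes {1..n}}"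
  proof clarify
    fix xs assume xs: "xs \<in> permutations_of_set {1..n}"
    then have "distinct xs" "set xs = {1..n}" "length xs = n"
      by (auto simp: permutations_of_set_def dest: distinct_card)
    then show "(\<lambda>i. if i \<in> {1..n} then xs ! (i - 1) else i) permutes {1..n}"
      by (intro inj_imp_permutes) (auto simp: inj_on_def nth_eq_iff_index_eq)
  qed
qed

lemma perm_descents_subset_iff:
  assumes w: "w permutes {1..n}"
  shows "perm_descents n w \<subseteq> U \<longleftrightarrow> descents_within U (map w [1..<Suc n])"
proof -
  have neq: "w i \<noteq> w (Suc i)" for i
    using permutes_inj[OF w] by (metis inj_eq n_not_Suc_n)
  have nth: "map w [1..<Suc n] ! m = w (Suc m)" if "m < n" for m
    using that by (simp add: nth_map_upt del: upt_Suc)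
  show ?thesis
  proof
    assume H: "perm_descents n w \<subseteq> U"
    show "descents_within U (map w [1..<Suc n])" unfolding descents_within_def
    proof (intro allI impI)
      fix m assume m: "Suc m < length (map w [1..<Suc n])" "Suc m \<notin> U"
      then have "Suc m < n" by (simp del: upt_Suc)
      moreover have "Suc m \<notin> perm_descents n w" using H m(2) by blast
      ultimately have "\<not> w (Suc (Suc m)) < w (Suc m)" by (simp add: perm_descents_def)
      then show "map w [1..<Suc n] ! m < map w [1..<Suc n] ! Suc m"
        using \<open>Suc m < n\<close> neq[of "Suc m"] by (simp add: nth del: upt_Suc)
    qed
  next
    assume H: "descents_within U (map w [1..<Suc n])"
    show "perm_descents n w \<subseteq> U"
    proof
      fix i assume "i \<in> perm_descents n w"
      then have i: "1 \<le> i" "i < n" "w (Suc i) < w i" by (auto simp: perm_descents_def)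
      then obtain m where m: "i = Suc m" by (cases i) auto
      show "i \<in> U"
      proof (rule ccontr)
        assume "i \<notin> U"
        then have "w i < w (Suc i)"
          using H i unfolding descents_within_def m by (auto simp: nth simp del: upt_Suc)
        then show False using i by simp
      qed
    qed
  qed
qed

lemma card_Collect_bij_betw:
  assumes "bij_betw f A B"
  shows "card {x \<in> A. P (f x)} = card {y \<in> B. P y}"
proof (rule bij_betw_same_card, rule bij_betw_subset[OF assms])
  have "f ` A = B" using assms by (simp add: bij_betw_def)
  then show "f ` {x \<in> A. P (f x)} = {y \<in> B. P y}" by blast
qed auto

lemma card_perms_descents_subset_comp_descents:
  assumes "\<beta> \<in> compositions n"
  shows "card {w. w permutes {1..n} \<and> perm_descents n w \<subseteq> comp_descents \<beta>} = multinom n \<beta>"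
proof -
  have "{w. w permutes {1..n} \<and> perm_descents n w \<subseteq> comp_descents \<beta>} =
      {w \<in> {w. w permutes {1..n}}. descents_within (comp_descents \<beta>) (map w [1..<Suc n])}"
    using perm_descents_subset_iff by blast
  then have "card {w. w permutes {1..n} \<and> perm_descents n w \<subseteq> comp_descents \<beta>} =
      card (desc_arrangements {1..n} \<beta>)"
    unfolding desc_arrangements_def
    using card_Collect_bij_betw[OF bij_betw_permutes_permutations_of_set] by simp
  also have "\<dots> = multinom n \<beta>"
    using assms card_desc_arrangements[of "{1..n}" \<beta>]
    by (simp add: compositions_def is_composition_def)
  finally show ?thesis .
qed

section \<open>Ribbon numbers modulo p\<close>

lemma boolean_moebius_inversion:
  fixes f g :: "'a set \<Rightarrow> 'b::comm_ring_1"
  assumes g: "\<And>U. finite U \<Longrightarrow> g U = (\<Sum>T\<in>Pow U. f T)" and S: "finite S"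
  shows "f S = (\<Sum>T\<in>Pow S. (-1) ^ (card S - card T) * g T)"
proof -
  have "(-1) ^ card S * f S = (\<Sum>T\<in>Pow S. (-1) ^ card T * g T)"
    by (rule inclusion_exclusion_symmetric) (simp_all add: g S)
  moreover have "(-1) ^ card S * (-1) ^ card S = (1 :: 'b)"
    by (simp flip: power_mult_distrib)
  ultimately have "f S = (-1) ^ card S * (\<Sum>T\<in>Pow S. (-1) ^ card T * g T)"
    by (metis mult.assoc mult_1)
  also have "\<dots> = (\<Sum>T\<in>Pow S. (-1) ^ (card S - card T) * g T)"
    unfolding sum_distrib_left
  proof (rule sum.cong[OF refl])
    fix T assume "T \<in> Pow S"
    then have "card T \<le> card S" using S by (simp add: card_mono)
    then have "(-1) ^ card S = (-1) ^ (card S - card T) * ((-1) ^ card T :: 'b)"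
      by (simp flip: power_add)
    then show "(-1) ^ card S * ((-1) ^ card T * g T) = (-1) ^ (card S - card T) * g T"
      by (simp add: mult.assoc)
  qed
  finally show ?thesis .
qed

definition num_perms_with_descents :: "nat \<Rightarrow> nat set \<Rightarrow> nat" where
  "num_perms_with_descents n S = card {w. w permutes {1..n} \<and> perm_descents n w = S}"

lemma ribbon_eq: "ribbon n \<alpha> = num_perms_with_descents n (comp_descents \<alpha>)"
  by (simp add: ribbon_def num_perms_with_descents_def)

lemma card_perms_descents_subset_eq_sum:
  assumes "finite U"
  shows "card {w. w permutes {1..n} \<and> perm_descents n w \<subseteq> U} = (\<Sum>T\<in>Pow U. num_perms_with_descents n T)"
proof -
  have "{w. w permutes {1..n} \<and> perm_descents n w \<subseteq> U} =
      (\<Union>T\<in>Pow U. {w. w permutes {1..n} \<and> perm_descents n w = T})" by auto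
  moreover have "finite {w. w permutes {1..n} \<and> perm_descents n w = T}" for T
    by (rule finite_subset[OF _ finite_permutations[of "{1..n}"]]) auto
  ultimately show ?thesis
    unfolding num_perms_with_descents_def using assms by (simp only:) (rule card_UN_disjoint; blast)
qed

lemma num_perms_with_descents_alternating_sum:
  assumes S: "S \<subseteq> {1..n-1}"
  shows "int (num_perms_with_descents n S) = (\<Sum>\<beta>\<in>{\<beta>\<in>compositions n. comp_descents \<beta> \<subseteq> S}.
            (-1) ^ (card S - card (comp_descents \<beta>)) * int (multinom n \<beta>))"
proof -
  let ?C = "{\<beta>\<in>compositions n. comp_descents \<beta> \<subseteq> S}"
  have fin: "finite S" using S finite_subset by blast
  have "comp_descents ` ?C = Pow S"
  proof
    show "Pow S \<subseteq> comp_descents ` ?C"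
    proof
      fix T assume "T \<in> Pow S"
      then have "T \<subseteq> {1..n-1}" using S by blast
      then obtain \<beta> where "\<beta> \<in> compositions n" "comp_descents \<beta> = T"
        using comp_descents_surj by blast
      then show "T \<in> comp_descents ` ?C" using \<open>T \<in> Pow S\<close> by blast
    qed
  qed blast
  then have bij: "bij_betw comp_descents ?C (Pow S)"
    by (intro bij_betw_subset[OF bij_betw_comp_descents]) auto
  have "int (num_perms_with_descents n S) =
      (\<Sum>T\<in>Pow S. (-1) ^ (card S - card T) *
         int (card {w. w permutes {1..n} \<and> perm_descents n w \<subseteq> T}))"
    using fin by (intro boolean_moebius_inversion) (simp_all only: card_perms_descents_subset_eq_sum of_nat_sum)
  also have "\<dots> = (\<Sum>\<beta>\<in>?C. (-1) ^ (card S - card (comp_descents \<beta>)) *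
      int (card {w. w permutes {1..n} \<and> perm_descents n w \<subseteq> comp_descents \<beta>}))"
    by (rule sum.reindex_bij_betw[OF bij, symmetric])
  also have "\<dots> = (\<Sum>\<beta>\<in>?C. (-1) ^ (card S - card (comp_descents \<beta>)) * int (multinom n \<beta>))"
    by (intro sum.cong refl) (use card_perms_descents_subset_comp_descents in simp)
  finally show ?thesis .
qed

definition digit_multinom_prod :: "nat \<Rightarrow> nat \<Rightarrow> nat \<Rightarrow> nat list \<Rightarrow> int" where
  "digit_multinom_prod p k n \<beta> = (\<Prod>j\<le>k. int (multinom (digit p n j) (map (\<lambda>b. digit p b j) \<beta>)))"

lemma multinom_cong_digit_multinom_prod:
  assumes "prime p" "n < p ^ Suc k" "\<beta> \<in> compositions n"
  shows "[int (multinom n \<beta>) = digit_multinom_prod p k n \<beta>] (mod int p)"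
proof -
  have "\<forall>b\<in>set \<beta>. b < p ^ Suc k"
    using assms(2,3) by (auto simp: compositions_def is_composition_def dest!: member_le_sum_list)
  then show ?thesis
    using lucas_multinom[OF assms(1,2)] unfolding digit_multinom_prod_def
    by (simp add: cong_int_iff flip: of_nat_prod)
qed

lemma digit_multinom_prod_nonzero_imp_carry_free:
  assumes "digit_multinom_prod p k n \<beta> \<noteq> 0"
  shows "\<forall>j\<le>k. (\<Sum>b\<leftarrow>\<beta>. digit p b j) = digit p n j"
  using assms unfolding digit_multinom_prod_def multinom_def
  by (auto simp: prod_zero_iff split: if_splits)

lemma digit_multinom_prod_eq_0:
  assumes "prime p" "n < p ^ Suc k" "\<beta> \<in> compositions n" "\<not> comp_descents \<beta> \<subseteq> Pset p k n"
  shows "digit_multinom_prod p k n \<beta> = 0"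
  using assms comp_descents_subset_Pset[OF prime_gt_1_nat[OF assms(1)] assms(2,3)]
    digit_multinom_prod_nonzero_imp_carry_free by blast

lemma rT_eq_sum_digit_multinom_prod:
  "rT p k n T = (\<Sum>\<beta>\<in>{\<beta>\<in>compositions n. comp_descents \<beta> \<subseteq> T}.
      (-1) ^ (card T - card (comp_descents \<beta>)) * digit_multinom_prod p k n \<beta>)"
  unfolding rT_def digit_multinom_prod_def[symmetric]
  by (rule sum.mono_neutral_left)
     (auto simp: finite_compositions dest: digit_multinom_prod_nonzero_imp_carry_free)

theorem num_perms_with_descents_cong_rT:
  assumes p: "prime p" and n: "n < p ^ Suc k" and S: "S \<subseteq> {1..n-1}"
  defines "P \<equiv> Pset p k n"
  shows "[int (num_perms_with_descents n S) = (-1) ^ card (S - P) * rT p k n (S \<inter> P)] (mod int p)"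
proof -
  let ?sign = "\<lambda>U \<beta>. (-1) ^ (card U - card (comp_descents \<beta>)) :: int"
  let ?C = "\<lambda>U. {\<beta>\<in>compositions n. comp_descents \<beta> \<subseteq> U}"
  have fin: "finite S" using S finite_subset by blast
  have lucas: "[int (num_perms_with_descents n S) = (\<Sum>\<beta>\<in>?C S. ?sign S \<beta> * digit_multinom_prod p k n \<beta>)] (mod int p)"
    unfolding num_perms_with_descents_alternating_sum[OF S]
    by (intro cong_sum cong_mult cong_refl) (auto intro: multinom_cong_digit_multinom_prod[OF p n])
  have "(\<Sum>\<beta>\<in>?C S. ?sign S \<beta> * digit_multinom_prod p k n \<beta>) =
      (\<Sum>\<beta>\<in>?C (S \<inter> P). ?sign S \<beta> * digit_multinom_prod p k n \<beta>)"
  proof (rule sum.mono_neutral_right)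
    show "\<forall>\<beta>\<in>?C S - ?C (S \<inter> P). ?sign S \<beta> * digit_multinom_prod p k n \<beta> = 0"
    proof
      fix \<beta> assume "\<beta> \<in> ?C S - ?C (S \<inter> P)"
      then have "\<beta> \<in> compositions n" "\<not> comp_descents \<beta> \<subseteq> Pset p k n"
        unfolding P_def by auto
      then show "?sign S \<beta> * digit_multinom_prod p k n \<beta> = 0"
        by (simp add: digit_multinom_prod_eq_0[OF p n])
    qed
  qed (auto simp: finite_compositions)
  also have "\<dots> = (\<Sum>\<beta>\<in>?C (S \<inter> P). (-1) ^ card (S - P) * (?sign (S \<inter> P) \<beta> * digit_multinom_prod p k n \<beta>))"
  proof (intro sum.cong refl)
    fix \<beta> assume "\<beta> \<in> ?C (S \<inter> P)"
    then have "card (comp_descents \<beta>) \<le> card (S \<inter> P)" using fin by (simp add: card_mono)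
    moreover have "card S = card (S \<inter> P) + card (S - P)" using fin by (rule card_Int_Diff)
    ultimately have "card S - card (comp_descents \<beta>) =
        card (S - P) + (card (S \<inter> P) - card (comp_descents \<beta>))" by linarith
    then show "?sign S \<beta> * digit_multinom_prod p k n \<beta> =
        (-1) ^ card (S - P) * (?sign (S \<inter> P) \<beta> * digit_multinom_prod p k n \<beta>)"
      by (simp add: power_add)
  qed
  also have "\<dots> = (-1) ^ card (S - P) * rT p k n (S \<inter> P)"
    by (simp add: rT_eq_sum_digit_multinom_prod sum_distrib_left)
  finally show ?thesis using lucas by simp
qed

section \<open>Counting compositions by residue\<close>

lemma card_subsets_split:
  assumes N: "finite N" and P: "P \<subseteq> N"
  shows "card {S. S \<subseteq> N \<and> \<Phi> (S \<inter> P) (S - P)} = (\<Sum>T\<in>Pow P. card {R. R \<subseteq> N - P \<and> \<Phi> T R})"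
proof -
  let ?split = "\<lambda>S. (S \<inter> P, S - P)"
  have "bij_betw ?split (Pow N) (Pow P \<times> Pow (N - P))"
    by (rule bij_betw_byWitness[where f' = "\<lambda>(T, R). T \<union> R"]) (use P in auto)
  then have "card {S \<in> Pow N. case_prod \<Phi> (?split S)} = card {TR \<in> Pow P \<times> Pow (N - P). case_prod \<Phi> TR}"
    by (rule card_Collect_bij_betw)
  also have "{TR \<in> Pow P \<times> Pow (N - P). case_prod \<Phi> TR} = (SIGMA T:Pow P. {R. R \<subseteq> N - P \<and> \<Phi> T R})"
    by auto
  also have "card \<dots> = (\<Sum>T\<in>Pow P. card {R. R \<subseteq> N - P \<and> \<Phi> T R})"
    using N P by (intro card_SigmaI) (auto intro: finite_subset)
  finally show ?thesis by simp
qed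

lemma card_even_add_odd_subsets:
  assumes "finite Q"
  shows "card {R. R \<subseteq> Q \<and> even (card R)} + card {R. R \<subseteq> Q \<and> odd (card R)} = 2 ^ card Q"
proof -
  have "Pow Q = {R. R \<subseteq> Q \<and> even (card R)} \<union> {R. R \<subseteq> Q \<and> odd (card R)}" by auto
  moreover have "card ({R. R \<subseteq> Q \<and> even (card R)} \<union> {R. R \<subseteq> Q \<and> odd (card R)}) =
      card {R. R \<subseteq> Q \<and> even (card R)} + card {R. R \<subseteq> Q \<and> odd (card R)}"
    using assms by (intro card_Un_disjoint) auto
  ultimately show ?thesis using card_Pow[OF assms] by simp
qed

lemma card_even_odd_subsets:
  assumes "finite Q" "Q \<noteq> {}"
  shows "card {R. R \<subseteq> Q \<and> even (card R)} = 2 ^ (card Q - 1)"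
    and "card {R. R \<subseteq> Q \<and> odd (card R)} = 2 ^ (card Q - 1)"
proof -
  have "card {R. R \<subseteq> Q \<and> even (card R)} = card {R. R \<subseteq> Q \<and> odd (card R)}"
    using card_subsupersets_even_odd[of Q "{}"] assms by auto
  moreover have "card {R. R \<subseteq> Q \<and> even (card R)} + card {R. R \<subseteq> Q \<and> odd (card R)} = 2 * 2 ^ (card Q - 1)"
    using assms card_even_add_odd_subsets[OF assms(1)] by (simp add: card_gt_0_iff flip: power_Suc)
  ultimately show "card {R. R \<subseteq> Q \<and> even (card R)} = 2 ^ (card Q - 1)"
    and "card {R. R \<subseteq> Q \<and> odd (card R)} = 2 ^ (card Q - 1)" by simp_all
qed

lemma card_signed_subsets_cong:
  fixes x i m :: int
  assumes "finite Q"
  shows "card {R. R \<subseteq> Q \<and> [(-1) ^ card R * x = i] (mod m)} =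
    (if [x = i] (mod m) then card {R. R \<subseteq> Q \<and> even (card R)} else 0) +
    (if [- x = i] (mod m) then card {R. R \<subseteq> Q \<and> odd (card R)} else 0)"
proof -
  let ?E = "{R. R \<subseteq> Q \<and> even (card R) \<and> [x = i] (mod m)}"
  let ?O = "{R. R \<subseteq> Q \<and> odd (card R) \<and> [- x = i] (mod m)}"
  have "{R. R \<subseteq> Q \<and> [(-1) ^ card R * x = i] (mod m)} = ?E \<union> ?O"
    by (auto simp: minus_one_power_iff)
  moreover have "card (?E \<union> ?O) = card ?E + card ?O"
    using assms by (intro card_Un_disjoint) auto
  ultimately show ?thesis by simp
qed

lemma cong_uminus_iff_if_dvd:
  fixes x i m :: int
  assumes "m dvd 2 * i"
  shows "[- x = i] (mod m) \<longleftrightarrow> [x = i] (mod m)"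
proof -
  have "m dvd (- x - i) \<longleftrightarrow> m dvd (- x - i) + 2 * i" using assms by (rule dvd_add_left_iff[symmetric])
  also have "(- x - i) + 2 * i = - (x - i)" by simp
  finally show ?thesis by (simp add: cong_iff_dvd_diff dvd_diff_commute)
qed

lemma cong_both_signs_imp_dvd:
  fixes x i m :: int
  assumes "[x = i] (mod m)" "[x = - i] (mod m)"
  shows "m dvd 2 * i"
proof -
  have "[i = - i] (mod m)" using assms cong_sym cong_trans by blast
  then show ?thesis by (simp add: cong_iff_dvd_diff)
qed

lemma card_signed_subsets_cong_if_dvd:
  fixes x i m :: int
  assumes Q: "finite Q" and "m dvd 2 * i \<or> Q = {}"
  shows "card {R. R \<subseteq> Q \<and> [(-1) ^ card R * x = i] (mod m)} = (if [x = i] (mod m) then 2 ^ card Q else 0)"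
  using assms(2)
proof
  assume "m dvd 2 * i"
  then have "[- x = i] (mod m) \<longleftrightarrow> [x = i] (mod m)" by (rule cong_uminus_iff_if_dvd)
  then show ?thesis
    using card_even_add_odd_subsets[OF Q] by (simp add: card_signed_subsets_cong[OF Q])
next
  assume "Q = {}"
  then have "{R. R \<subseteq> Q \<and> [(-1) ^ card R * x = i] (mod m)} = (if [x = i] (mod m) then {{}} else {})"
    by auto
  then show ?thesis using \<open>Q = {}\<close> by simp
qed

lemma card_signed_subsets_cong_if_not_dvd:
  fixes x i m :: int
  assumes Q: "finite Q" "Q \<noteq> {}" and not_dvd: "\<not> m dvd 2 * i"
  shows "card {R. R \<subseteq> Q \<and> [(-1) ^ card R * x = i] (mod m)} =
    (if [x = i] (mod m) \<or> [x = - i] (mod m) then 2 ^ (card Q - 1) else 0)"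
proof -
  have "[- x = i] (mod m) \<longleftrightarrow> [x = - i] (mod m)"
    using cong_minus_minus_iff[of x "- i" m] by simp
  moreover have "\<not> ([x = i] (mod m) \<and> [x = - i] (mod m))"
    using cong_both_signs_imp_dvd not_dvd by blast
  ultimately show ?thesis
    unfolding card_signed_subsets_cong[OF Q(1)] card_even_odd_subsets[OF Q] by simp
qed

lemma odd_prime_not_dvd_double:
  assumes "prime p" "p \<noteq> 2" "0 < i" "i < int p"
  shows "\<not> int p dvd 2 * i"
proof
  assume "int p dvd 2 * i"
  then have "int p dvd int (2 * nat i)" using assms(3) by simp
  then have "p dvd 2 * nat i" by (simp only: of_nat_dvd_iff)
  then have "p dvd 2 \<or> p dvd nat i" using assms(1) prime_dvd_mult_iff by blast
  moreover have "\<not> p dvd 2"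
  proof
    assume "p dvd 2"
    then have "p \<le> 2" by (simp add: dvd_imp_le)
    then show False using assms(2) prime_gt_1_nat[OF assms(1)] by simp
  qed
  moreover have "\<not> p dvd nat i" using assms(3,4) by (auto dest: dvd_imp_le)
  ultimately show False by blast
qed

lemma c_count_eq_card_descent_sets:
  "c_count p i n = card {S. S \<subseteq> {1..n-1} \<and> [int (num_perms_with_descents n S) = i] (mod int p)}"
  using card_Collect_bij_betw[OF bij_betw_comp_descents,
      where P = "\<lambda>S. [int (num_perms_with_descents n S) = i] (mod int p)"]
  by (simp add: c_count_def ribbon_eq)

lemma c_count_eq_sum_Pset:
  assumes p: "prime p" and n: "n < p ^ Suc k"
  defines "P \<equiv> Pset p k n"
  shows "c_count p i n =
    (\<Sum>T\<in>Pow P. card {R. R \<subseteq> {1..n-1} - P \<and> [(-1) ^ card R * rT p k n T = i] (mod int p)})"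
proof -
  have "[int (num_perms_with_descents n S) = i] (mod int p) \<longleftrightarrow>
      [(-1) ^ card (S - P) * rT p k n (S \<inter> P) = i] (mod int p)" if "S \<subseteq> {1..n-1}" for S
    using num_perms_with_descents_cong_rT[OF p n that] cong_sym cong_trans unfolding P_def by metis
  then have "c_count p i n =
      card {S. S \<subseteq> {1..n-1} \<and> [(-1) ^ card (S - P) * rT p k n (S \<inter> P) = i] (mod int p)}"
    unfolding c_count_eq_card_descent_sets by (metis (no_types, lifting) Collect_cong)
  also have "\<dots> = (\<Sum>T\<in>Pow P. card {R. R \<subseteq> {1..n-1} - P \<and> [(-1) ^ card R * rT p k n T = i] (mod int p)})"
    using Pset_subset[OF n] unfolding P_def by (intro card_subsets_split) simp_all
  finally show ?thesis .
qed

lemma sum_if_const_eq_card: "finite A \<Longrightarrow> (\<Sum>x\<in>A. if P x then c else 0) = c * card {x \<in> A. P x}"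
  by (simp add: sum.inter_filter[symmetric])

theorem theorem3p1:
  fixes p n k :: nat and i :: int
  assumes "prime p" and "n \<ge> 2"
    and "p ^ k \<le> n" and "n < p ^ Suc k"
    and "0 \<le> i" and "i < int p"
  shows "c_count p i n =
    (if p = 2 \<or> i = 0 \<or> (\<forall>j<k. digit p n j = p - 1)
     then 2 ^ (n + 1 - (\<Prod>j\<le>k. digit p n j + 1)) *
          card {T. T \<subseteq> Pset p k n \<and> [rT p k n T = i] (mod int p)}
     else 2 ^ (n - (\<Prod>j\<le>k. digit p n j + 1)) *
          card {T. T \<subseteq> Pset p k n \<and> ([rT p k n T = i] (mod int p) \<or> [rT p k n T = - i] (mod int p))})"
proof -
  define P Q where "P = Pset p k n" and "Q = {1..n-1} - P"
  have p: "p > 1" using assms(1) prime_gt_1_nat by blast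
  have P: "finite (Pow P)" using Pset_subset[OF assms(4)] by (simp add: P_def finite_subset)
  have Q: "finite Q" "card Q = n + 1 - (\<Prod>j\<le>k. digit p n j + 1)"
      "Q = {} \<longleftrightarrow> (\<forall>j<k. digit p n j = p - 1)"
    using card_Pset_complement[OF p assms(4,2)] Pset_eq_iff_low_digits_max[OF p assms(3,4)]
      Pset_subset[OF assms(4)] by (auto simp: Q_def P_def)
  have count: "c_count p i n = (\<Sum>T\<in>Pow P. card {R. R \<subseteq> Q \<and> [(-1) ^ card R * rT p k n T = i] (mod int p)})"
    unfolding P_def Q_def by (rule c_count_eq_sum_Pset[OF assms(1,4)])
  show ?thesis
  proof (cases "p = 2 \<or> i = 0 \<or> (\<forall>j<k. digit p n j = p - 1)")
    case True
    then have "int p dvd 2 * i \<or> Q = {}" using Q(3) by auto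
    note signed = card_signed_subsets_cong_if_dvd[OF Q(1) this]
    show ?thesis
      unfolding if_P[OF True] count signed sum_if_const_eq_card[OF P] by (simp add: Q(2) P_def)
  next
    case False
    then have "Q \<noteq> {}" "\<not> int p dvd 2 * i"
      using odd_prime_not_dvd_double[OF assms(1)] assms(5,6) Q(3) by auto
    note signed = card_signed_subsets_cong_if_not_dvd[OF Q(1) this]
    show ?thesis
      unfolding if_not_P[OF False] count signed sum_if_const_eq_card[OF P] by (simp add: Q(2) P_def)
  qed
qed

end
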